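(* A canonical term $t$ of $\Phi$ is in normal form (in $\Phi$) if and only if $\langle\!\langle t\rangle\!\rangle$ is in $\rightarrow_v$-normal form.
   Context: $\lambda$-terms: $M::=x\mid\lambda x.M\mid MN$, variables from a set $\Upsilon$ with a fixed total order, $FV(M)$ the ordered sequence of free variables. Values $V::=x\mid\lambda x.M$; weak call-by-value reduction $\rightarrow_v$: $(\lambda x.M)V\rightarrow_v M\{V/x\}$ for values $V$, closed under $ML$ and $LM$ contexts (no reduction under $\lambda$). $\Phi$ is the constructor rewrite system with binary function symbol $\mathbf{app}$ and constructors $c_{x,M}$ ($M$ a $\lambda$-term, $x\in\Upsilon$) of arity the length of $FV(\lambda x.M)$; $[\![x]\!]=x$, $[\![\lambda x.M]\!]=c_{x,M}(x_1,\dots,x_n)$ with $FV(\lambda x.M)=x_1,\dots,x_n$, $[\![MN]\!]=\mathbf{app}([\![M]\!],[\![N]\!])$; rules $\mathbf{app}(c_{x,M}(x_1,\dots,x_n),x)\rightarrow[\![M]\!]$; rewriting is call-by-value (variables of a rule are instantiated with constructor terms, i.e. closed terms built only from constructors; steps may occur anywhere). A term is in normal form if no step applies. $\langle\!\langle x\rangle\!\rangle=x$, $\langle\!\langle\mathbf{app}(u,v)\rangle\!\rangle=\langle\!\langle u\rangle\!\rangle\langle\!\langle v\rangle\!\rangle$, $\langle\!\langle c_{x,M}(t_1,\dots,t_n)\rangle\!\rangle=(\lambda x.M)\{\langle\!\langle t_1\rangle\!\rangle/x_1,\dots,\langle\!\langle t_n\rangle\!\rangle/x_n\}$ with $FV(\lambda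 x.M)=x_1,\dots,x_n$. A closed term $t$ is canonical if it is a constructor term or $t=\mathbf{app}(u,v)$ with $u,v$ canonical. *)

theory Defs
  imports Main
begin

datatype lterm = Var nat | Lam nat lterm | App lterm lterm

fun fv :: "lterm \<Rightarrow> nat set" where
  "fv (Var x) = {x}"
| "fv (Lam x M) = fv M - {x}"
| "fv (App M N) = fv M \<union> fv N"

lemma finite_fv [simp]: "finite (fv M)"
  by (induction M) auto

definition fvlist :: "lterm \<Rightarrow> nat list" where
  "fvlist M = sorted_list_of_set (fv M)"

primrec psubst :: "(nat \<Rightarrow> lterm) \<Rightarrow> lterm \<Rightarrow> lterm" where
  "psubst \<sigma> (Var x) = \<sigma> x"
| "psubst \<sigma> (App M N) = App (psubst \<sigma> M) (psubst \<sigma> N)"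
| "psubst \<sigma> (Lam y M) =
     (let S = (\<Union>w\<in>fv M - {y}. fv (\<sigma> w));
          z = (if y \<notin> S then y else Suc (Max S))
      in Lam z (psubst (\<sigma>(y := Var z)) M))"

definition subst1 :: "lterm \<Rightarrow> nat \<Rightarrow> lterm \<Rightarrow> lterm" where
  "subst1 M x N = psubst (Var(x := N)) M"

fun is_value :: "lterm \<Rightarrow> bool" where
  "is_value (Var x) = True"
| "is_value (Lam x M) = True"
| "is_value (App M N) = False"

inductive beta_v :: "lterm \<Rightarrow> lterm \<Rightarrow> bool" where
  beta: "is_value V \<Longrightarrow> beta_v (App (Lam x M) V) (subst1 M x V)"
| appL: "beta_v M M' \<Longrightarrow> beta_v (App M N) (App M' N)"
| appR: "beta_v N N' \<Longrightarrow> beta_v (App M N) (App M N')"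

definition v_normal :: "lterm \<Rightarrow> bool" where
  "v_normal M \<longleftrightarrow> \<not> (\<exists>N. beta_v M N)"

text \<open>Terms of Phi: variables, the binary function symbol app, constructors c_{x,M}.\<close>
datatype pterm = PVar nat | PApp pterm pterm | PCon nat lterm "pterm list"

fun encode :: "lterm \<Rightarrow> pterm" where
  "encode (Var x) = PVar x"
| "encode (Lam x M) = PCon x M (map PVar (fvlist (Lam x M)))"
| "encode (App M N) = PApp (encode M) (encode N)"

inductive constr_term :: "pterm \<Rightarrow> bool" where
  "(\<forall>t\<in>set ts. constr_term t) \<Longrightarrow> length ts = length (fvlist (Lam x M))
     \<Longrightarrow> constr_term (PCon x M ts)"

primrec psub :: "(nat \<Rightarrow> pterm) \<Rightarrow> pterm \<Rightarrow> pterm" where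
  "psub \<theta> (PVar x) = \<theta> x"
| "psub \<theta> (PApp u v) = PApp (psub \<theta> u) (psub \<theta> v)"
| "psub \<theta> (PCon x M ts) = PCon x M (map (psub \<theta>) ts)"

definition zipsub :: "nat list \<Rightarrow> pterm list \<Rightarrow> nat \<Rightarrow> pterm" where
  "zipsub xs ts y = (case map_of (zip xs ts) y of Some t \<Rightarrow> t | None \<Rightarrow> PVar y)"

text \<open>Call-by-value rewriting with the rules app(c_{x,M}(x_1..x_n), x) -> [[M]],
  the rule variables instantiated by constructor terms, steps anywhere.\<close>
inductive phi_step :: "pterm \<Rightarrow> pterm \<Rightarrow> bool" where
  rule: "length ts = length (fvlist (Lam x M)) \<Longrightarrow> (\<forall>t\<in>set ts. constr_term t) \<Longrightarrow> constr_term v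
     \<Longrightarrow> phi_step (PApp (PCon x M ts) v)
                  (psub ((zipsub (fvlist (Lam x M)) ts)(x := v)) (encode M))"
| appL: "phi_step u u' \<Longrightarrow> phi_step (PApp u v) (PApp u' v)"
| appR: "phi_step v v' \<Longrightarrow> phi_step (PApp u v) (PApp u v')"
| con: "phi_step t t' \<Longrightarrow> phi_step (PCon x M (ts1 @ t # ts2)) (PCon x M (ts1 @ t' # ts2))"

definition phi_normal :: "pterm \<Rightarrow> bool" where
  "phi_normal t \<longleftrightarrow> \<not> (\<exists>u. phi_step t u)"

definition lzipsub :: "nat list \<Rightarrow> lterm list \<Rightarrow> nat \<Rightarrow> lterm" where
  "lzipsub xs Ns y = (case map_of (zip xs Ns) y of Some N \<Rightarrow> N | None \<Rightarrow> Var y)"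

fun decode :: "pterm \<Rightarrow> lterm" where
  "decode (PVar x) = Var x"
| "decode (PApp u v) = App (decode u) (decode v)"
| "decode (PCon x M ts) = psubst (lzipsub (fvlist (Lam x M)) (map decode ts)) (Lam x M)"

inductive canonical :: "pterm \<Rightarrow> bool" where
  "constr_term t \<Longrightarrow> canonical t"
| "canonical u \<Longrightarrow> canonical v \<Longrightarrow> canonical (PApp u v)"

end

theory Submission
  imports Defs
begin

text \<open>Both systems reduce an application only at its head or inside its two components, and a
  head step fires exactly when the function is an abstraction (resp. a constructor term) and the
  argument a value (resp. a constructor term). Constructor terms are irreducible and decode to
  abstractions, which are irreducible because there is no reduction under \<open>\<lambda>\<close>; so on canonical
  terms the two head-redex conditions coincide, and normality transfers by induction.\<close>

lemma constr_term_phi_normal: "constr_term t \<Longrightarrow> phi_normal t"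
proof (induction rule: constr_term.induct)
  case (1 ts x M)
  show ?case
    unfolding phi_normal_def
  proof
    assume "\<exists>u. phi_step (PCon x M ts) u"
    then obtain u where "phi_step (PCon x M ts) u" by blast
    then show False
      using 1 by cases (auto simp: phi_normal_def)
  qed
qed

lemma decode_PCon_is_Lam: "\<exists>y N. decode (PCon x M ts) = Lam y N"
  by (simp add: Let_def)

lemma v_normal_Lam: "v_normal (Lam x M)"
  by (auto simp: v_normal_def elim: beta_v.cases)

lemma canonical_decode_is_Lam_iff:
  "canonical t \<Longrightarrow> (\<exists>y N. decode t = Lam y N) \<longleftrightarrow> constr_term t"
proof (induction rule: canonical.induct)
  case (1 t)
  then show ?case
    by (auto elim: constr_term.cases intro: decode_PCon_is_Lam)
next
  case (2 u v)
  then show ?case by (auto elim: constr_term.cases)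
qed

lemma canonical_decode_is_value_iff:
  "canonical t \<Longrightarrow> is_value (decode t) \<longleftrightarrow> constr_term t"
proof (induction rule: canonical.induct)
  case (1 t)
  then show ?case
    by (auto elim: constr_term.cases simp: Let_def)
next
  case (2 u v)
  then show ?case by (auto elim: constr_term.cases)
qed

lemma phi_normal_PApp_iff:
  "phi_normal (PApp u v) \<longleftrightarrow> phi_normal u \<and> phi_normal v \<and> \<not> (constr_term u \<and> constr_term v)"
proof
  assume normal: "phi_normal (PApp u v)"
  have "\<not> (constr_term u \<and> constr_term v)"
  proof
    assume constr: "constr_term u \<and> constr_term v"
    then obtain x M ts where "u = PCon x M ts" "\<forall>t\<in>set ts. constr_term t"
      "length ts = length (fvlist (Lam x M))"
      by (auto elim: constr_term.cases)
    with constr normal show False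
      unfolding phi_normal_def by (blast intro: phi_step.rule)
  qed
  with normal show "phi_normal u \<and> phi_normal v \<and> \<not> (constr_term u \<and> constr_term v)"
    unfolding phi_normal_def by (blast intro: phi_step.appL phi_step.appR)
next
  assume parts: "phi_normal u \<and> phi_normal v \<and> \<not> (constr_term u \<and> constr_term v)"
  show "phi_normal (PApp u v)"
    unfolding phi_normal_def
  proof
    assume "\<exists>w. phi_step (PApp u v) w"
    then obtain w where "phi_step (PApp u v) w" by blast
    then show False
      by cases (use parts in \<open>auto simp: phi_normal_def intro: constr_term.intros\<close>)
  qed
qed

lemma v_normal_App_iff:
  "v_normal (App a b) \<longleftrightarrow> v_normal a \<and> v_normal b \<and> \<not> ((\<exists>y N. a = Lam y N) \<and> is_value b)"
proof
  assume "v_normal (App a b)"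
  then show "v_normal a \<and> v_normal b \<and> \<not> ((\<exists>y N. a = Lam y N) \<and> is_value b)"
    unfolding v_normal_def by (blast intro: beta_v.intros)
next
  assume parts: "v_normal a \<and> v_normal b \<and> \<not> ((\<exists>y N. a = Lam y N) \<and> is_value b)"
  show "v_normal (App a b)"
    unfolding v_normal_def
  proof
    assume "\<exists>w. beta_v (App a b) w"
    then obtain w where "beta_v (App a b) w" by blast
    then show False
      by cases (use parts in \<open>auto simp: v_normal_def\<close>)
  qed
qed

theorem lemma3:
  assumes "canonical t"
  shows "phi_normal t \<longleftrightarrow> v_normal (decode t)"
  using assms
proof (induction rule: canonical.induct)
  case (1 t)
  then have "phi_normal t"
    by (rule constr_term_phi_normal)
  moreover have "v_normal (decode t)"
    using 1 by (auto elim: constr_term.cases simp: Let_def v_normal_Lam)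
  ultimately show ?case by simp
next
  case (2 u v)
  then show ?case
    using canonical_decode_is_Lam_iff[OF 2(1)] canonical_decode_is_value_iff[OF 2(2)]
    by (simp add: phi_normal_PApp_iff v_normal_App_iff)
qed

end
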